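(* Let $A$ be a finite set. Then every strongly irreducible subshift $X \subset A^{\mathbb Z}$ is a W-subshift.
   Context: A subshift of $A^{\mathbb Z}$ is a closed shift-invariant subset. $X$ is strongly irreducible if there is a finite $\Delta\subset\mathbb Z$ such that for all finite $\Omega_1,\Omega_2\subset\mathbb Z$ with $(\Omega_1-\Delta)\cap\Omega_2=\varnothing$ and all $x_1,x_2\in X$ there is $x\in X$ with $x|_{\Omega_1}=x_1|_{\Omega_1}$, $x|_{\Omega_2}=x_2|_{\Omega_2}$. $L(X)$ is the set of finite words (including the empty word) appearing as $x(i)\cdots x(j)$ in some $x\in X$; $|w|$ is word length. $X$ is a W-subshift if there is an integer $n_0\ge0$ such that for all $u,v\in L(X)$ there is $c\in L(X)$ with $|c|\le n_0$ and $ucv\in L(X)$. *)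

theory Defs
  imports "HOL-Analysis.Analysis"
begin

text \<open>Configurations in A^Z are functions int => 'a, where the finite alphabet A is
  the (finite) type 'a. A^Z carries the prodiscrete (product of discrete) topology.\<close>

definition shift_invariant :: "(int \<Rightarrow> 'a) set \<Rightarrow> bool" where
  "shift_invariant X \<longleftrightarrow> (\<forall>k::int. \<forall>x\<in>X. (\<lambda>i. x (i + k)) \<in> X)"

definition subshift :: "(int \<Rightarrow> 'a) set \<Rightarrow> bool" where
  "subshift X \<longleftrightarrow>
     closedin (product_topology (\<lambda>_::int. discrete_topology (UNIV::'a set)) UNIV) X
     \<and> shift_invariant X"

definition strongly_irreducible :: "(int \<Rightarrow> 'a) set \<Rightarrow> bool" where
  "strongly_irreducible X \<longleftrightarrow>
     (\<exists>\<Delta>::int set. finite \<Delta> \<and>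
        (\<forall>\<Omega>1 \<Omega>2. finite \<Omega>1 \<and> finite \<Omega>2 \<and>
           {a - d | a d. a \<in> \<Omega>1 \<and> d \<in> \<Delta>} \<inter> \<Omega>2 = {} \<longrightarrow>
           (\<forall>x1\<in>X. \<forall>x2\<in>X. \<exists>x\<in>X.
              (\<forall>i\<in>\<Omega>1. x i = x1 i) \<and> (\<forall>i\<in>\<Omega>2. x i = x2 i))))"

definition language :: "(int \<Rightarrow> 'a) set \<Rightarrow> 'a list set" where
  "language X = {[]} \<union> {map (\<lambda>n. x (i + int n)) [0..<m] | x i m. x \<in> X}"

definition W_subshift :: "(int \<Rightarrow> 'a) set \<Rightarrow> bool" where
  "W_subshift X \<longleftrightarrow>
     subshift X \<and>
     (\<exists>n0::nat. \<forall>u\<in>language X. \<forall>v\<in>language X.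
        \<exists>c\<in>language X. length c \<le> n0 \<and> u @ c @ v \<in> language X)"

end

theory Submission
  imports Defs
begin

text \<open>If \<Delta> \<subseteq> [-n0, n0], strong irreducibility lets us glue the block of one point of X
  on [0, |u|) to the block of another on [|u| + n0, |u| + n0 + |v|); by shift invariance
  u and v occur at these positions, and the gap filler read off the glued point is a word
  of length n0 with u c v in the language.\<close>

definition block :: "(int \<Rightarrow> 'a) \<Rightarrow> int \<Rightarrow> nat \<Rightarrow> 'a list" where
  "block x i m = map (\<lambda>n. x (i + int n)) [0..<m]"

lemma length_block [simp]: "length (block x i m) = m"
  by (simp add: block_def)

lemma block_append: "block x i (m + k) = block x i m @ block x (i + int m) k"
  by (induction k) (simp_all add: block_def algebra_simps)

lemma block_cong:
  assumes "\<And>t. i \<le> t \<Longrightarrow> t < i + int m \<Longrightarrow> x t = y t"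
  shows "block x i m = block y i m"
  using assms by (simp add: block_def)

lemma block_shift: "block (\<lambda>t. x (t + k)) i m = block x (i + k) m"
  by (simp add: block_def algebra_simps)

lemma block_in_language: "x \<in> X \<Longrightarrow> block x i m \<in> language X"
  unfolding language_def block_def by blast

lemma language_block_at:
  assumes "shift_invariant X" "X \<noteq> {}" "u \<in> language X"
  obtains x where "x \<in> X" "u = block x a (length u)"
proof -
  obtain y i where y: "y \<in> X" and u: "u = block y i (length u)"
    using assms(2,3) unfolding language_def block_def by fastforce
  have "(\<lambda>t. y (t + (i - a))) \<in> X"
    using assms(1) y unfolding shift_invariant_def by blast
  moreover have "u = block (\<lambda>t. y (t + (i - a))) a (length u)"
    using u by (simp add: block_shift)
  ultimately show thesis by (rule that)
qed

lemma strongly_irreducible_block_gluing: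
  assumes "strongly_irreducible X"
  obtains n0 :: nat where
    "\<And>x1 x2 a m k. x1 \<in> X \<Longrightarrow> x2 \<in> X \<Longrightarrow> \<exists>x\<in>X.
       block x a m = block x1 a m \<and> block x (a + int (m + n0)) k = block x2 (a + int (m + n0)) k"
proof -
  obtain \<Delta> :: "int set" where "finite \<Delta>" and glue:
    "\<forall>\<Omega>1 \<Omega>2. finite \<Omega>1 \<and> finite \<Omega>2 \<and>
       {a - d | a d. a \<in> \<Omega>1 \<and> d \<in> \<Delta>} \<inter> \<Omega>2 = {} \<longrightarrow>
       (\<forall>x1\<in>X. \<forall>x2\<in>X. \<exists>x\<in>X. (\<forall>i\<in>\<Omega>1. x i = x1 i) \<and> (\<forall>i\<in>\<Omega>2. x i = x2 i))"
    using assms unfolding strongly_irreducible_def by (elim exE conjE) (rule that)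
  define n0 where "n0 = nat (Max (insert 0 (abs ` \<Delta>)))"
  have bound: "-d \<le> int n0" if "d \<in> \<Delta>" for d
  proof -
    have "\<bar>d\<bar> \<le> Max (insert 0 (abs ` \<Delta>))"
      using \<open>finite \<Delta>\<close> that by (intro Max_ge) auto
    then show ?thesis unfolding n0_def by linarith
  qed
  show thesis
  proof (rule that)
    fix x1 x2 a m k assume "x1 \<in> X" "x2 \<in> X"
    define b where "b = a + int (m + n0)"
    have "{s - d | s d. s \<in> {a..<a + int m} \<and> d \<in> \<Delta>} \<inter> {b..<b + int k} = {}"
      using bound unfolding b_def by fastforce
    then obtain x where "x \<in> X"
      and "\<forall>t\<in>{a..<a + int m}. x t = x1 t" "\<forall>t\<in>{b..<b + int k}. x t = x2 t"
      using glue[rule_format, of "{a..<a + int m}" "{b..<b + int k}" x1 x2] \<open>x1 \<in> X\<close> \<open>x2 \<in> X\<close>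
      by auto
    then show "\<exists>x\<in>X. block x a m = block x1 a m \<and> block x b k = block x2 b k"
      by (auto intro!: bexI[of _ x] block_cong)
  qed
qed

lemma strongly_irreducible_bounded_gap:
  assumes "shift_invariant X" "strongly_irreducible X"
  shows "\<exists>n0. \<forall>u\<in>language X. \<forall>v\<in>language X.
           \<exists>c\<in>language X. length c \<le> n0 \<and> u @ c @ v \<in> language X"
proof (cases "X = {}")
  case True
  then show ?thesis by (auto simp: language_def)
next
  case False
  obtain n0 where glue: "\<And>x1 x2 a m k. x1 \<in> X \<Longrightarrow> x2 \<in> X \<Longrightarrow> \<exists>x\<in>X.
       block x a m = block x1 a m \<and> block x (a + int (m + n0)) k = block x2 (a + int (m + n0)) k"
    using strongly_irreducible_block_gluing[OF assms(2)] by blast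
  have "\<exists>c\<in>language X. length c \<le> n0 \<and> u @ c @ v \<in> language X"
    if "u \<in> language X" "v \<in> language X" for u v
  proof -
    obtain x1 where "x1 \<in> X" "u = block x1 0 (length u)"
      using language_block_at[OF assms(1) False \<open>u \<in> language X\<close>] .
    moreover obtain x2 where "x2 \<in> X" "v = block x2 (int (length u + n0)) (length v)"
      using language_block_at[OF assms(1) False \<open>v \<in> language X\<close>] .
    ultimately obtain x where "x \<in> X" and "u = block x 0 (length u)"
      and "v = block x (int (length u + n0)) (length v)"
      using glue[of x1 x2 0 "length u" "length v"] by auto
    then have "u @ block x (int (length u)) n0 @ v = block x 0 (length u + n0 + length v)"
      by (simp add: block_append add.assoc)
    then show ?thesis
      using block_in_language[OF \<open>x \<in> X\<close>] by (metis length_block order_refl)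
  qed
  then show ?thesis by blast
qed

theorem proposition4p5:
  fixes X :: "(int \<Rightarrow> 'a::finite) set"
  assumes "subshift X"
    and "strongly_irreducible X"
  shows "W_subshift X"
  using assms strongly_irreducible_bounded_gap[of X]
  unfolding W_subshift_def subshift_def by blast

end
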